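(* Let $n$ be an even positive integer, let $V_0=\{v\in\{-1,1\}^n : v_1=1,\ \sum_i v_i=0\}$, let $L\subset\mathbb{Z}^n$ be the lattice generated by $V_0$, let $P(V_0)=\{\sum_{v\in W}v : W\subseteq V_0\}$, and let $g(V_0)=\frac12\sum_{v\in V_0}v$. Let $R$ be a positive integer such that $\binom{n-2}{(n-2)/2}>4R(n-1)$. Then every $u\in L$ with $\|u-g(V_0)\|_\infty\le R-\frac n2$ satisfies $u\in P(V_0)$. *)

theory Defs
  imports Complex_Main
begin

text \<open>Vectors in Z^n are modelled as functions nat => int, coordinate i (0-based,
  i < n) corresponds to coordinate i+1 of the paper; coordinates >= n are 0.\<close>

definition V0 :: "nat \<Rightarrow> (nat \<Rightarrow> int) set" where
  "V0 n = {v. (\<forall>i<n. v i \<in> {-1, 1}) \<and> (\<forall>i\<ge>n. v i = 0) \<and> v 0 = 1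
              \<and> (\<Sum>i<n. v i) = 0}"

definition lattice_V0 :: "nat \<Rightarrow> (nat \<Rightarrow> int) set" where
  "lattice_V0 n = {(\<lambda>i. \<Sum>v\<in>V0 n. c v * v i) | c :: (nat \<Rightarrow> int) \<Rightarrow> int. True}"

definition P_V0 :: "nat \<Rightarrow> (nat \<Rightarrow> int) set" where
  "P_V0 n = {(\<lambda>i. \<Sum>v\<in>W. v i) | W. W \<subseteq> V0 n}"

definition g_V0 :: "nat \<Rightarrow> nat \<Rightarrow> real" where
  "g_V0 n i = (1/2) * (\<Sum>v\<in>V0 n. real_of_int (v i))"

end

theory Submission
  imports Defs "HOL-Combinatorics.Transposition"
begin

text \<open>
  A lattice vector \<open>u\<close> has coordinate sum zero, and all its coordinates have the parity of
  \<open>u 0\<close>, because \<open>v i + v 0\<close> is even for every \<open>v \<in> V0 n\<close>. Write \<open>n = 2m + 6\<close> and fix a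
  coordinate \<open>x \<ge> 1\<close> at which \<open>u\<close> is maximal. All \<open>v\<close> with \<open>v x = 1\<close>, together with a part of
  the remaining vectors that is closed under flipping the signs off the coordinates \<open>0\<close> and
  \<open>x\<close>, form a set \<open>W \<subseteq> V0 n\<close> with \<open>card W = u 0\<close> whose coordinate sums lie below \<open>u\<close> except
  at \<open>x\<close>. This uses that \<open>g(V0)\<close> has coordinates \<open>(D - A)/2\<close> off \<open>0\<close>, with
  \<open>A = C(2m+3, m+1)\<close> and \<open>D = C(2m+3, m)\<close>, and that the binomial hypothesis makes
  \<open>A - D = C(2m+4, m+2)/(m+3)\<close> exceed the width of the box.

  As long as the sum over \<open>W\<close> exceeds \<open>u\<close> at \<open>x\<close>, some coordinate \<open>j\<close> has a deficit, and
  swapping the coordinates \<open>x\<close> and \<open>j\<close> of a suitable member of \<open>W\<close> lowers the excess by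
  \<open>2\<close> while keeping the other sums below \<open>u\<close>. When no excess is left, the zero coordinate
  sums force the sum over \<open>W\<close> to equal \<open>u\<close>.
\<close>

definition sign_vector :: "nat \<Rightarrow> nat set \<Rightarrow> nat \<Rightarrow> int" where
  "sign_vector n S k = (if k = 0 then 1 else if k < n then (if k \<in> S then 1 else -1) else 0)"

lemma V0D:
  assumes "v \<in> V0 n"
  shows "\<And>i. i < n \<Longrightarrow> v i = -1 \<or> v i = 1" and "\<And>i. n \<le> i \<Longrightarrow> v i = 0"
    and "v 0 = 1" and "(\<Sum>i<n. v i) = 0"
  using assms unfolding V0_def by auto

lemma V0_eq_sign_vector:
  assumes "v \<in> V0 n"
  shows "v = sign_vector n {k\<in>{1..<n}. v k = 1}"
proof
  fix k
  show "v k = sign_vector n {k\<in>{1..<n}. v k = 1} k"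
    using V0D(1,2)[OF assms, of k] V0D(2)[OF assms, of 0] V0D(3)[OF assms]
    by (cases "k = 0"; cases "k < n") (auto simp: sign_vector_def)
qed

lemma finite_V0: "finite (V0 n)"
proof (rule finite_subset)
  show "V0 n \<subseteq> sign_vector n ` Pow {1..<n}"
    using V0_eq_sign_vector by blast
qed simp

lemma sum_sign_vector:
  assumes "S \<subseteq> {1..<n}" and "0 < n"
  shows "(\<Sum>k<n. sign_vector n S k) = 2 * int (card S) + 2 - int n"
proof -
  have "finite S"
    using assms(1) finite_subset by blast
  have "{..<n} = insert 0 {1..<n}"
    using assms(2) by auto
  then have "(\<Sum>k<n. sign_vector n S k) = 1 + (\<Sum>k\<in>{1..<n}. if k \<in> S then 1 else -1)"
    by (simp add: sign_vector_def)
  also have "\<dots> = 1 + int (card S) - int (card ({1..<n} - S))"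
    using assms(1) by (simp add: sum.If_cases Diff_eq Int_absorb1)
  also have "card ({1..<n} - S) = (n - 1) - card S"
    using assms(1) \<open>finite S\<close> by (simp add: card_Diff_subset)
  finally have "(\<Sum>k<n. sign_vector n S k) = 1 + int (card S) - int (n - 1 - card S)" .
  moreover have "card S \<le> n - 1"
    using card_mono[OF _ assms(1)] by simp
  ultimately show ?thesis
    using assms(2) by (simp add: of_nat_diff)
qed

lemma sign_vector_in_V0:
  assumes "S \<subseteq> {1..<n}" and "even n" and "0 < n" and "card S = n div 2 - 1"
  shows "sign_vector n S \<in> V0 n"
  using sum_sign_vector[OF assms(1,3)] assms(2-4)
  by (auto simp: V0_def sign_vector_def elim!: evenE)

lemma sign_vector_inj:
  assumes "S \<subseteq> {1..<n}" and "T \<subseteq> {1..<n}" and "sign_vector n S = sign_vector n T"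
  shows "S = T"
proof -
  have "S = {k\<in>{1..<n}. sign_vector n S k = 1}" and "T = {k\<in>{1..<n}. sign_vector n T k = 1}"
    using assms(1,2) by (auto simp: sign_vector_def)
  with assms(3) show ?thesis
    by simp
qed

lemma card_positive_coords_V0:
  assumes "v \<in> V0 n" and "0 < n"
  shows "card {k\<in>{1..<n}. v k = 1} = n div 2 - 1"
proof -
  let ?S = "{k\<in>{1..<n}. v k = 1}"
  have "0 = (\<Sum>k<n. sign_vector n ?S k)"
    using V0D(4)[OF assms(1)] V0_eq_sign_vector[OF assms(1)] by simp
  also have "\<dots> = 2 * int (card ?S) + 2 - int n"
    using assms(2) by (intro sum_sign_vector) auto
  finally show ?thesis
    by linarith
qed

lemma V0_prescribed_signs_eq_image:
  assumes "even n" and "0 < n" and "P \<subseteq> {1..<n}" and "Q \<subseteq> {1..<n}" and "P \<inter> Q = {}"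
    and "card P \<le> n div 2 - 1"
  shows "{v\<in>V0 n. (\<forall>p\<in>P. v p = 1) \<and> (\<forall>q\<in>Q. v q = -1)}
       = (\<lambda>T. sign_vector n (P \<union> T)) ` {T. T \<subseteq> {1..<n} - P - Q \<and> card T = n div 2 - 1 - card P}"
    (is "?V = ?f ` ?F")
proof (rule subset_antisym)
  have "finite P"
    using assms(3) finite_subset by blast
  show "?V \<subseteq> ?f ` ?F"
  proof clarify
    fix v assume v: "v \<in> V0 n" "\<forall>p\<in>P. v p = 1" "\<forall>q\<in>Q. v q = -1"
    let ?S = "{k\<in>{1..<n}. v k = 1}"
    have "P \<subseteq> ?S"
      using v(2) assms(3) by auto
    then have "v = ?f (?S - P)" and "card (?S - P) = n div 2 - 1 - card P"
      using V0_eq_sign_vector[OF v(1)] card_positive_coords_V0[OF v(1) assms(2)] \<open>finite P\<close>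
      by (simp_all add: card_Diff_subset Un_absorb1)
    moreover have "?S - P \<subseteq> {1..<n} - P - Q"
      using v(3) by auto
    ultimately show "v \<in> ?f ` ?F"
      by blast
  qed
  show "?f ` ?F \<subseteq> ?V"
  proof (rule image_subsetI)
    fix T assume "T \<in> ?F"
    then have T: "T \<subseteq> {1..<n} - P - Q" "card T = n div 2 - 1 - card P"
      by auto
    then have "card (P \<union> T) = card P + card T"
      using \<open>finite P\<close> finite_subset[OF T(1)] by (intro card_Un_disjoint) auto
    then have "card (P \<union> T) = n div 2 - 1"
      using T(2) assms(6) by linarith
    then have "?f T \<in> V0 n"
      using assms(1-3) T(1) by (intro sign_vector_in_V0) auto
    moreover have "\<forall>p\<in>P. ?f T p = 1"
      using assms(3) by (auto simp: sign_vector_def)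
    moreover have "\<forall>q\<in>Q. ?f T q = -1"
      using assms(4,5) T(1) by (auto simp: sign_vector_def)
    ultimately show "?f T \<in> ?V"
      by blast
  qed
qed

lemma card_V0_prescribed_signs:
  assumes "even n" and "0 < n" and "P \<subseteq> {1..<n}" and "Q \<subseteq> {1..<n}" and "P \<inter> Q = {}"
    and "card P \<le> n div 2 - 1"
  shows "card {v\<in>V0 n. (\<forall>p\<in>P. v p = 1) \<and> (\<forall>q\<in>Q. v q = -1)}
       = card ({1..<n} - P - Q) choose (n div 2 - 1 - card P)"
proof -
  let ?F = "{T. T \<subseteq> {1..<n} - P - Q \<and> card T = n div 2 - 1 - card P}"
  have "inj_on (\<lambda>T. sign_vector n (P \<union> T)) ?F"
  proof (rule inj_onI)
    fix T T' assume "T \<in> ?F" "T' \<in> ?F" "sign_vector n (P \<union> T) = sign_vector n (P \<union> T')"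
    then have "P \<union> T = P \<union> T'"
      using assms(3) by (intro sign_vector_inj) auto
    with \<open>T \<in> ?F\<close> \<open>T' \<in> ?F\<close> show "T = T'"
      by blast
  qed
  then show ?thesis
    unfolding V0_prescribed_signs_eq_image[OF assms] card_image[OF \<open>inj_on _ ?F\<close>]
    by (simp add: n_subsets)
qed

definition subset_sum :: "(nat \<Rightarrow> int) set \<Rightarrow> nat \<Rightarrow> int" where
  "subset_sum W i = (\<Sum>v\<in>W. v i)"

lemma subset_sum_in_P_V0: "W \<subseteq> V0 n \<Longrightarrow> subset_sum W \<in> P_V0 n"
  unfolding P_V0_def subset_sum_def by blast

lemma subset_sum_coord_0:
  assumes "W \<subseteq> V0 n"
  shows "subset_sum W 0 = int (card W)"
proof -
  have "subset_sum W 0 = (\<Sum>v\<in>W. 1)"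
    unfolding subset_sum_def using assms by (intro sum.cong) (auto simp: V0D(3))
  then show ?thesis
    by simp
qed

lemma subset_sum_beyond: "W \<subseteq> V0 n \<Longrightarrow> n \<le> i \<Longrightarrow> subset_sum W i = 0"
  unfolding subset_sum_def by (intro sum.neutral) (auto simp: V0D(2))

lemma sum_subset_sum: "W \<subseteq> V0 n \<Longrightarrow> (\<Sum>i<n. subset_sum W i) = 0"
  unfolding subset_sum_def by (subst sum.swap) (simp add: V0D(4) subset_iff)

lemma even_subset_sum_add_card:
  assumes "W \<subseteq> V0 n" and "i < n"
  shows "even (subset_sum W i + int (card W))"
proof -
  have "subset_sum W i + int (card W) = (\<Sum>v\<in>W. v i + 1)"
    unfolding subset_sum_def by (simp add: sum.distrib)
  moreover have "even (v i + 1)" if "v \<in> W" for v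
    using V0D(1)[of v n i] subsetD[OF assms(1) that] assms(2) by auto
  ultimately show ?thesis
    by (simp add: dvd_sum)
qed

lemma subset_sum_le_card:
  assumes "W \<subseteq> V0 n" and "i < n"
  shows "subset_sum W i \<le> int (card W)"
proof -
  have "subset_sum W i \<le> (\<Sum>v\<in>W. 1)"
    unfolding subset_sum_def using V0D(1)[of _ n i] assms by (intro sum_mono) fastforce
  then show ?thesis
    by simp
qed

lemma subset_sum_Un:
  "finite A \<Longrightarrow> finite B \<Longrightarrow> A \<inter> B = {} \<Longrightarrow> subset_sum (A \<union> B) i = subset_sum A i + subset_sum B i"
  unfolding subset_sum_def by (simp add: sum.union_disjoint)

lemma subset_sum_replace:
  assumes "finite W" and "v \<in> W" and "w \<notin> W"
  shows "subset_sum (insert w (W - {v})) i = subset_sum W i - v i + w i"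
  using assms unfolding subset_sum_def by (simp add: sum_diff1)

lemma V0_comp_transpose:
  assumes "v \<in> V0 n" and "i \<in> {1..<n}" and "j \<in> {1..<n}"
  shows "v \<circ> transpose i j \<in> V0 n"
proof -
  have "bij_betw (transpose i j) {..<n} {..<n}"
    using assms(2,3) by simp
  then have "(\<Sum>k<n. (v \<circ> transpose i j) k) = (\<Sum>k<n. v k)"
    using sum.reindex_bij_betw by (simp add: comp_def)
  then show ?thesis
    using assms V0D[OF assms(1)] unfolding V0_def
    by (auto simp: transpose_def)
qed

text \<open>Otherwise the transposition would map the members with \<open>(v i, v j) = (1, -1)\<close>
  injectively into those with \<open>(v i, v j) = (-1, 1)\<close>, and coordinate \<open>i\<close> of the subset sum
  could not exceed coordinate \<open>j\<close>.\<close>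
lemma exists_transposable_member:
  assumes "finite W" and "\<And>v k. v \<in> W \<Longrightarrow> k \<in> {i, j} \<Longrightarrow> v k = -1 \<or> v k = 1"
    and "subset_sum W j < subset_sum W i"
  obtains v where "v \<in> W" "v i = 1" "v j = -1" "v \<circ> transpose i j \<notin> W"
proof -
  let ?A = "{v\<in>W. v i = 1 \<and> v j = -1}" and ?B = "{v\<in>W. v i = -1 \<and> v j = 1}"
  have "i \<noteq> j"
    using assms(3) by auto
  have "\<exists>v\<in>?A. v \<circ> transpose i j \<notin> W"
  proof (rule ccontr)
    assume "\<not> ?thesis"
    then have "(\<lambda>v. v \<circ> transpose i j) ` ?A \<subseteq> ?B"
      using \<open>i \<noteq> j\<close> by auto
    moreover have "inj_on (\<lambda>v. v \<circ> transpose i j) ?A"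
      by (rule inj_onI) (metis comp_assoc comp_id transpose_comp_involutory)
    ultimately have "card ?A \<le> card ?B"
      using assms(1) by (intro card_inj_on_le) auto
    moreover have "subset_sum W i - subset_sum W j
        = (\<Sum>v\<in>W. (if v i = 1 \<and> v j = -1 then 2 else 0) - (if v i = -1 \<and> v j = 1 then 2 else 0))"
      unfolding subset_sum_def sum_subtractf[symmetric]
      using assms(2) by (intro sum.cong) fastforce+
    then have "subset_sum W i - subset_sum W j = 2 * int (card ?A) - 2 * int (card ?B)"
      using assms(1) by (simp add: sum_subtractf sum.inter_filter[symmetric])
    ultimately show False
      using assms(3) by linarith
  qed
  then show ?thesis
    using that by blast
qed

lemma subset_sum_exchange:
  assumes "finite W" and "W \<subseteq> V0 n" and "i \<in> {1..<n}" and "j \<in> {1..<n}"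
    and "subset_sum W j < subset_sum W i"
  obtains W' where "finite W'" "W' \<subseteq> V0 n" "card W' = card W"
    "subset_sum W' i = subset_sum W i - 2" "subset_sum W' j = subset_sum W j + 2"
    "\<And>k. k \<noteq> i \<Longrightarrow> k \<noteq> j \<Longrightarrow> subset_sum W' k = subset_sum W k"
proof -
  have "v k = -1 \<or> v k = 1" if "v \<in> W" "k \<in> {i, j}" for v k
    using V0D(1)[of v n k] that assms(2-4) by auto
  then obtain v where v: "v \<in> W" "v i = 1" "v j = -1" "v \<circ> transpose i j \<notin> W"
    using exists_transposable_member[OF assms(1) _ assms(5)] by blast
  let ?w = "v \<circ> transpose i j"
  let ?W' = "insert ?w (W - {v})"
  have "i \<noteq> j"
    using assms(5) by auto
  have "?w \<in> V0 n"
    using V0_comp_transpose v(1) assms(2-4) by blast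
  then have "?W' \<subseteq> V0 n"
    using assms(2) by auto
  moreover have "card ?W' = card W"
    using assms(1) v(1,4) card_gt_0_iff[of W] by auto
  moreover have "subset_sum ?W' k = subset_sum W k - v k + ?w k" for k
    using subset_sum_replace[OF assms(1) v(1,4)] .
  ultimately show ?thesis
    using that[of ?W'] assms(1) v(2,3) \<open>i \<noteq> j\<close> by simp
qed

lemma lattice_V0_beyond:
  assumes "u \<in> lattice_V0 n" and "n \<le> i"
  shows "u i = 0"
  using assms unfolding lattice_V0_def by (auto intro!: sum.neutral simp: V0D(2))

lemma sum_lattice_V0:
  assumes "u \<in> lattice_V0 n"
  shows "(\<Sum>i<n. u i) = 0"
proof -
  obtain c where u: "u = (\<lambda>i. \<Sum>v\<in>V0 n. c v * v i)"
    using assms unfolding lattice_V0_def by blast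
  have "(\<Sum>i<n. u i) = (\<Sum>v\<in>V0 n. c v * (\<Sum>i<n. v i))"
    unfolding u by (subst sum.swap) (simp add: sum_distrib_left)
  then show ?thesis
    by (simp add: V0D(4))
qed

lemma even_lattice_V0_add_coord_0:
  assumes "u \<in> lattice_V0 n" and "i < n"
  shows "even (u i + u 0)"
proof -
  obtain c where u: "u = (\<lambda>i. \<Sum>v\<in>V0 n. c v * v i)"
    using assms unfolding lattice_V0_def by blast
  have "even (v i + v 0)" if "v \<in> V0 n" for v
    using V0D(1)[OF that assms(2)] V0D(3)[OF that] by auto
  then show ?thesis
    unfolding u by (simp add: sum.distrib[symmetric] distrib_left dvd_sum)
qed

definition dominated_except :: "nat \<Rightarrow> (nat \<Rightarrow> int) \<Rightarrow> nat \<Rightarrow> (nat \<Rightarrow> int) set \<Rightarrow> bool" where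
  "dominated_except n u x W \<longleftrightarrow> finite W \<and> W \<subseteq> V0 n \<and> int (card W) = u 0 \<and>
     (\<forall>i\<in>{1..<n}. i \<noteq> x \<longrightarrow> subset_sum W i \<le> u i)"

lemma dominated_except_le:
  assumes "dominated_except n u x W" and "i < n" and "i \<noteq> x"
  shows "subset_sum W i \<le> u i"
  using assms subset_sum_coord_0[of W n] unfolding dominated_except_def
  by (cases "i = 0") auto

lemma subset_sum_eq_if_dominated:
  assumes "dominated_except n u x W" and "subset_sum W x \<le> u x"
    and "(\<Sum>i<n. u i) = 0" and "\<And>i. n \<le> i \<Longrightarrow> u i = 0"
  shows "subset_sum W = u"
proof
  fix i
  have "W \<subseteq> V0 n"
    using assms(1) unfolding dominated_except_def by blast
  have below: "subset_sum W k \<le> u k" if "k \<in> {..<n}" for k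
    using dominated_except_le[OF assms(1)] assms(2) that by (cases "k = x") auto
  have sums: "sum (subset_sum W) {..<n} = sum u {..<n}"
    using sum_subset_sum[OF \<open>W \<subseteq> V0 n\<close>] assms(3) by simp
  show "subset_sum W i = u i"
    using sum_mono_inv[OF sums below, of i] subset_sum_beyond[OF \<open>W \<subseteq> V0 n\<close>, of i] assms(4)
    by (cases "i < n") auto
qed

lemma even_subset_sum_diff_if_dominated:
  assumes "dominated_except n u x W" and "\<And>i. i < n \<Longrightarrow> even (u i + u 0)" and "i < n"
  shows "even (subset_sum W i - u i)"
proof -
  have "W \<subseteq> V0 n" and card: "int (card W) = u 0"
    using assms(1) unfolding dominated_except_def by auto
  have "subset_sum W i - u i = (subset_sum W i + int (card W)) - (u i + u 0)"
    using card by simp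
  then show ?thesis
    using even_subset_sum_add_card[OF \<open>W \<subseteq> V0 n\<close> assms(3)] assms(2)[OF assms(3)]
    by (metis dvd_diff)
qed

lemma exists_deficit_if_excess:
  assumes "dominated_except n u x W" and "u x < subset_sum W x" and "x \<in> {1..<n}"
    and "(\<Sum>i<n. u i) = 0"
  obtains j where "j \<in> {1..<n}" and "subset_sum W j < u j"
proof -
  have sub: "W \<subseteq> V0 n" and card: "int (card W) = u 0"
    using assms(1) unfolding dominated_except_def by auto
  have "\<not> (\<forall>i\<in>{..<n}. u i \<le> subset_sum W i)"
  proof
    assume "\<forall>i\<in>{..<n}. u i \<le> subset_sum W i"
    then have "(\<Sum>i<n. u i) < (\<Sum>i<n. subset_sum W i)"
      using assms(2,3) by (intro sum_strict_mono_ex1 bexI[of _ x]) auto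
    then show False
      using sum_subset_sum[OF sub] assms(4) by simp
  qed
  then obtain j where j: "j < n" "subset_sum W j < u j"
    by (auto simp: not_le)
  moreover have "j \<noteq> 0"
    using j(2) subset_sum_coord_0[OF sub] card by (metis less_irrefl)
  ultimately show ?thesis
    using that[of j] by simp
qed

text \<open>All differences between \<open>subset_sum W\<close> and \<open>u\<close> are even, so the excess at \<open>x\<close> and
  the deficit at \<open>j\<close> are both at least \<open>2\<close> and exchanging coordinates \<open>x\<close> and \<open>j\<close> in one
  member of \<open>W\<close> does not overshoot at \<open>j\<close>.\<close>
lemma dominated_except_step:
  assumes W: "dominated_except n u x W" and excess: "u x < subset_sum W x"
    and x: "x \<in> {1..<n}" and u_max: "\<forall>j\<in>{1..<n}. u j \<le> u x"
    and u_sum: "(\<Sum>i<n. u i) = 0" and u_even: "\<And>i. i < n \<Longrightarrow> even (u i + u 0)"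
  obtains W' where "dominated_except n u x W'" "subset_sum W' x = subset_sum W x - 2"
proof -
  have fin: "finite W" and sub: "W \<subseteq> V0 n" and card: "int (card W) = u 0"
    using W unfolding dominated_except_def by auto
  obtain j where j: "j \<in> {1..<n}" "subset_sum W j < u j"
    using exists_deficit_if_excess[OF W excess x u_sum] .
  have "even (subset_sum W x - u x)" and "even (subset_sum W j - u j)"
    using even_subset_sum_diff_if_dominated[OF W u_even] x j(1) by simp_all
  then have "u x + 2 \<le> subset_sum W x" and j_gap: "subset_sum W j + 2 \<le> u j"
    using excess j(2) by presburger+
  then have "subset_sum W j < subset_sum W x"
    using u_max j(1) by fastforce
  then obtain W' where W': "finite W'" "W' \<subseteq> V0 n" "card W' = card W"
    "subset_sum W' x = subset_sum W x - 2" "subset_sum W' j = subset_sum W j + 2"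
    "\<And>k. k \<noteq> x \<Longrightarrow> k \<noteq> j \<Longrightarrow> subset_sum W' k = subset_sum W k"
    using subset_sum_exchange[OF fin sub x j(1)] by blast
  have "subset_sum W' i \<le> u i" if "i \<in> {1..<n}" "i \<noteq> x" for i
  proof (cases "i = j")
    case True
    then show ?thesis
      using W'(5) j_gap by simp
  next
    case False
    then show ?thesis
      using W'(6)[OF that(2) False] dominated_except_le[OF W _ that(2)] that(1) by simp
  qed
  then have "dominated_except n u x W'"
    using W'(1-3) card unfolding dominated_except_def by simp
  then show ?thesis
    using W'(4) by (rule that)
qed

lemma greedy_completion:
  assumes "dominated_except n u x W"
    and x: "x \<in> {1..<n}" and u_max: "\<forall>j\<in>{1..<n}. u j \<le> u x"
    and u_sum: "(\<Sum>i<n. u i) = 0" and u_beyond: "\<And>i. n \<le> i \<Longrightarrow> u i = 0"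
    and u_even: "\<And>i. i < n \<Longrightarrow> even (u i + u 0)"
  shows "u \<in> P_V0 n"
  using assms(1)
proof (induction "nat (subset_sum W x - u x)" arbitrary: W rule: less_induct)
  case less
  show ?case
  proof (cases "subset_sum W x \<le> u x")
    case True
    then have "u = subset_sum W"
      using subset_sum_eq_if_dominated[OF less.prems True u_sum u_beyond] by simp
    then show ?thesis
      using subset_sum_in_P_V0 less.prems unfolding dominated_except_def by blast
  next
    case False
    then have "u x < subset_sum W x"
      by simp
    then obtain W' where W': "dominated_except n u x W'" "subset_sum W' x = subset_sum W x - 2"
      by (rule dominated_except_step[OF less.prems _ x u_max u_sum u_even])
    have "nat (subset_sum W' x - u x) < nat (subset_sum W x - u x)"
      using W'(2) False by simp
    then show ?thesis
      using less.hyps W'(1) by blast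
  qed
qed

definition flip_except :: "nat \<Rightarrow> (nat \<Rightarrow> int) \<Rightarrow> nat \<Rightarrow> int" where
  "flip_except x v k = (if k = 0 \<or> k = x then v k else - v k)"

lemma flip_except_flip_except [simp]: "flip_except x (flip_except x v) = v"
  by (auto simp: flip_except_def)

lemma flip_except_in_V0:
  assumes "v \<in> V0 n" and "x \<in> {1..<n}" and "v x = -1"
  shows "flip_except x v \<in> V0 n"
proof -
  have "(\<Sum>k<n. flip_except x v k) + (\<Sum>k<n. v k) = (\<Sum>k<n. (if k = 0 then 2 * v k else 0) + (if k = x then 2 * v k else 0))"
    unfolding sum.distrib[symmetric] using assms(2) by (intro sum.cong) (auto simp: flip_except_def)
  also have "\<dots> = 0"
    using assms(2,3) V0D(3)[OF assms(1)] by (simp add: sum.distrib)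
  finally have "(\<Sum>k<n. flip_except x v k) = 0"
    using V0D(4)[OF assms(1)] by simp
  then show ?thesis
    using V0D[OF assms(1)] assms(2) unfolding V0_def flip_except_def by auto
qed

lemma flip_except_neq:
  assumes "v \<in> V0 n" and "i \<in> {1..<n}" and "i \<noteq> x"
  shows "flip_except x v \<noteq> v"
proof
  assume "flip_except x v = v"
  then have "flip_except x v i = v i"
    by simp
  then have "v i = 0"
    using assms(2,3) by (simp add: flip_except_def)
  then show False
    using V0D(1)[OF assms(1), of i] assms(2) by auto
qed

lemma subset_sum_flip_closed:
  assumes "finite Q" and "flip_except x ` Q \<subseteq> Q" and "k \<noteq> 0" and "k \<noteq> x"
  shows "subset_sum Q k = 0"
proof -
  have inj: "inj_on (flip_except x) Q"
    by (rule inj_on_inverseI[of _ "flip_except x"]) simp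
  have "Q \<subseteq> flip_except x ` Q"
  proof
    fix v assume "v \<in> Q"
    then have "flip_except x v \<in> Q"
      using assms(2) by blast
    then show "v \<in> flip_except x ` Q"
      by (rule rev_image_eqI) simp
  qed
  then have "flip_except x ` Q = Q"
    using assms(2) by blast
  then have "subset_sum Q k = (\<Sum>v\<in>Q. flip_except x v k)"
    using sum.reindex[OF inj, of "\<lambda>v. v k"] by (simp add: subset_sum_def)
  also have "\<dots> = - subset_sum Q k"
    using assms(3,4) by (simp add: flip_except_def subset_sum_def sum_negf)
  finally show ?thesis
    by simp
qed

lemma exists_invariant_subset_of_even_card:
  assumes "finite C" and "\<forall>v\<in>C. f v \<in> C \<and> f v \<noteq> v" and "\<forall>v\<in>C. f (f v) = v"
    and "2 * c \<le> card C"
  shows "\<exists>Q\<subseteq>C. f ` Q \<subseteq> Q \<and> card Q = 2 * c"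
  using assms(4)
proof (induction c)
  case 0
  show ?case
    by (intro exI[of _ "{}"]) simp
next
  case (Suc c)
  then obtain Q where Q: "Q \<subseteq> C" "f ` Q \<subseteq> Q" "card Q = 2 * c"
    by auto
  have "finite Q"
    using Q(1) assms(1) finite_subset by blast
  have "card Q < card C"
    using Q(3) Suc.prems by simp
  then have "\<not> C \<subseteq> Q"
    using card_mono[OF \<open>finite Q\<close>, of C] by linarith
  then obtain v where v: "v \<in> C" "v \<notin> Q"
    by blast
  have "f v \<notin> Q"
  proof
    assume "f v \<in> Q"
    then have "f (f v) \<in> Q"
      using Q(2) by blast
    then show False
      using v assms(3) by simp
  qed
  moreover have "f v \<noteq> v" and "f v \<in> C" and "f (f v) = v"
    using assms(2,3) v(1) by auto
  ultimately have "card (insert v (insert (f v) Q)) = 2 * Suc c"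
    using \<open>finite Q\<close> v(2) Q(3) by simp
  moreover have "insert v (insert (f v) Q) \<subseteq> C"
    using Q(1) v(1) \<open>f v \<in> C\<close> by blast
  moreover have "f ` insert v (insert (f v) Q) \<subseteq> insert v (insert (f v) Q)"
    using Q(2) \<open>f (f v) = v\<close> by auto
  ultimately show ?case
    by blast
qed

text \<open>Take \<open>t div 2\<close> flip pairs, whose contributions cancel, plus one more member if \<open>t\<close>
  is odd.\<close>
lemma flip_closed_padding:
  assumes "finite C" and "C \<subseteq> V0 n" and "\<forall>v\<in>C. flip_except x v \<in> C \<and> flip_except x v \<noteq> v"
    and "t \<le> card C"
  obtains Q where "Q \<subseteq> C" "card Q = t" "\<forall>k\<in>{1..<n}. k \<noteq> x \<longrightarrow> subset_sum Q k \<le> 1"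
proof -
  have t: "t = 2 * (t div 2) + t mod 2"
    by simp
  have "\<exists>Q\<subseteq>C. flip_except x ` Q \<subseteq> Q \<and> card Q = 2 * (t div 2)"
    by (rule exists_invariant_subset_of_even_card[OF assms(1,3)]) (use assms(4) in simp_all)
  then obtain Q0 where Q0: "Q0 \<subseteq> C" "flip_except x ` Q0 \<subseteq> Q0" "card Q0 = 2 * (t div 2)"
    by blast
  have "finite Q0"
    using finite_subset[OF Q0(1) assms(1)] .
  have "t mod 2 \<le> card (C - Q0)"
    using card_Diff_subset[OF \<open>finite Q0\<close> Q0(1)] Q0(3) assms(4) t by linarith
  then obtain E where E: "E \<subseteq> C - Q0" "card E = t mod 2" "finite E"
    by (rule obtain_subset_with_card_n)
  have disj: "Q0 \<inter> E = {}" and "E \<subseteq> V0 n"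
    using E(1) assms(2) by auto
  have bound: "subset_sum (Q0 \<union> E) k \<le> 1" if "k \<in> {1..<n}" "k \<noteq> x" for k
  proof -
    have "subset_sum (Q0 \<union> E) k = subset_sum Q0 k + subset_sum E k"
      by (rule subset_sum_Un[OF \<open>finite Q0\<close> E(3) disj])
    also have "subset_sum Q0 k = 0"
      using subset_sum_flip_closed[OF \<open>finite Q0\<close> Q0(2)] that by simp
    also have "subset_sum E k \<le> int (card E)"
      using subset_sum_le_card[OF \<open>E \<subseteq> V0 n\<close>, of k] that(1) by simp
    finally show ?thesis
      using E(2) by simp
  qed
  show ?thesis
  proof (rule that[of "Q0 \<union> E"])
    show "Q0 \<union> E \<subseteq> C"
      using Q0(1) E(1) by blast
    show "card (Q0 \<union> E) = t"
      using card_Un_disjoint[OF \<open>finite Q0\<close> E(3) disj] Q0(3) E(2) t by simp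
    show "\<forall>k\<in>{1..<n}. k \<noteq> x \<longrightarrow> subset_sum (Q0 \<union> E) k \<le> 1"
      using bound by blast
  qed
qed

lemma exists_other_coord:
  fixes n x :: nat
  assumes "2 < n"
  obtains i where "i \<in> {1..<n}" and "i \<noteq> x"
  using assms that[of "if x = 1 then 2 else 1"] by auto

lemma V0_split_at_coord:
  assumes "x \<in> {1..<n}"
  shows "V0 n = {v\<in>V0 n. v x = 1} \<union> {v\<in>V0 n. v x = -1}"
proof (rule subset_antisym)
  show "V0 n \<subseteq> {v\<in>V0 n. v x = 1} \<union> {v\<in>V0 n. v x = -1}"
  proof
    fix v assume "v \<in> V0 n"
    moreover have "v x = -1 \<or> v x = 1"
      using V0D(1)[OF \<open>v \<in> V0 n\<close>, of x] assms by simp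
    ultimately show "v \<in> {v\<in>V0 n. v x = 1} \<union> {v\<in>V0 n. v x = -1}"
      by blast
  qed
qed blast

lemma card_V0_coord_pos_neg:
  assumes "x \<in> {1..<2*m+6}" and "i \<in> {1..<2*m+6}" and "i \<noteq> x"
  shows "card {v\<in>V0 (2*m+6). v x = 1 \<and> v i = -1} = (2*m+3) choose (m+1)"
proof -
  have "card {v\<in>V0 (2*m+6). (\<forall>p\<in>{x}. v p = 1) \<and> (\<forall>q\<in>{i}. v q = -1)}
      = card ({1..<2*m+6} - {x} - {i}) choose ((2*m+6) div 2 - 1 - card {x})"
    using assms by (intro card_V0_prescribed_signs) auto
  moreover have "card ({1..<2*m+6} - {x} - {i}) = 2*m+3"
    using assms by (simp add: card_Diff_singleton_if)
  ultimately show ?thesis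
    by simp
qed

lemma card_V0_coord_pos_pos:
  assumes "x \<in> {1..<2*m+6}" and "i \<in> {1..<2*m+6}" and "i \<noteq> x"
  shows "card {v\<in>V0 (2*m+6). v x = 1 \<and> v i = 1} = (2*m+3) choose m"
proof -
  have "card {v\<in>V0 (2*m+6). (\<forall>p\<in>{x, i}. v p = 1) \<and> (\<forall>q\<in>{}. v q = -1)}
      = card ({1..<2*m+6} - {x, i} - {}) choose ((2*m+6) div 2 - 1 - card {x, i})"
    using assms by (intro card_V0_prescribed_signs) auto
  moreover have "card ({1..<2*m+6} - {x, i} - {}) = 2*m+3"
    using assms by (simp add: card_Diff_subset)
  ultimately show ?thesis
    using assms(3) by simp
qed

lemma card_V0_coord_neg:
  assumes "x \<in> {1..<2*m+6}"
  shows "card {v\<in>V0 (2*m+6). v x = -1} = (2*m+4) choose (m+2)"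
proof -
  have "card {v\<in>V0 (2*m+6). (\<forall>p\<in>{}. v p = 1) \<and> (\<forall>q\<in>{x}. v q = -1)}
      = card ({1..<2*m+6} - {} - {x}) choose ((2*m+6) div 2 - 1 - card ({} :: nat set))"
    by (rule card_V0_prescribed_signs) (use assms in auto)
  moreover have "card ({1..<2*m+6} - {} - {x}) = 2*m+4"
    using assms by (simp add: card_Diff_singleton_if)
  ultimately show ?thesis
    by simp
qed

lemma V0_coord_pos_split:
  assumes "i \<in> {1..<n}"
  shows "{v\<in>V0 n. v x = 1} = {v\<in>V0 n. v x = 1 \<and> v i = -1} \<union> {v\<in>V0 n. v x = 1 \<and> v i = 1}"
  using V0_split_at_coord[OF assms] by blast

lemma card_V0_coord_pos:
  assumes "x \<in> {1..<2*m+6}"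
  shows "card {v\<in>V0 (2*m+6). v x = 1} = ((2*m+3) choose (m+1)) + ((2*m+3) choose m)"
proof -
  obtain i where i: "i \<in> {1..<2*m+6}" "i \<noteq> x"
    using exists_other_coord[of "2*m+6"] by auto
  have "finite {v\<in>V0 (2*m+6). v x = 1 \<and> v i = -1}" "finite {v\<in>V0 (2*m+6). v x = 1 \<and> v i = 1}"
    using finite_V0 by auto
  then show ?thesis
    unfolding V0_coord_pos_split[OF i(1)]
    using card_Un_disjoint card_V0_coord_pos_neg[OF assms i] card_V0_coord_pos_pos[OF assms i]
    by fastforce
qed

lemma subset_sum_V0_coord_pos:
  assumes "x \<in> {1..<2*m+6}" and "i \<in> {1..<2*m+6}" and "i \<noteq> x"
  shows "subset_sum {v\<in>V0 (2*m+6). v x = 1} i = int ((2*m+3) choose m) - int ((2*m+3) choose (m+1))"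
proof -
  let ?N = "{v\<in>V0 (2*m+6). v x = 1 \<and> v i = -1}" and ?P = "{v\<in>V0 (2*m+6). v x = 1 \<and> v i = 1}"
  have fin: "finite ?N" "finite ?P" and disj: "?N \<inter> ?P = {}"
    using finite_V0 by auto
  have "subset_sum ?N i = (\<Sum>v\<in>?N. -1)" and "subset_sum ?P i = (\<Sum>v\<in>?P. 1)"
    unfolding subset_sum_def by (auto intro: sum.cong)
  then show ?thesis
    unfolding V0_coord_pos_split[OF assms(2)] subset_sum_Un[OF fin disj]
    using card_V0_coord_pos_neg[OF assms] card_V0_coord_pos_pos[OF assms] by simp
qed

lemma flip_except_closed_V0_coord_neg:
  assumes "x \<in> {1..<2*m+6}" and "v \<in> V0 (2*m+6)" and "v x = -1"
  shows "flip_except x v \<in> {v\<in>V0 (2*m+6). v x = -1}" and "flip_except x v \<noteq> v"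
proof -
  obtain i where i: "i \<in> {1..<2*m+6}" "i \<noteq> x"
    using exists_other_coord[of "2*m+6"] by auto
  show "flip_except x v \<in> {v\<in>V0 (2*m+6). v x = -1}"
    using flip_except_in_V0[OF assms(2,1,3)] assms(3) by (simp add: flip_except_def)
  show "flip_except x v \<noteq> v"
    using flip_except_neq[OF assms(2) i] .
qed

lemma subset_sum_V0_coord_neg:
  assumes "x \<in> {1..<2*m+6}" and "k \<noteq> 0" and "k \<noteq> x"
  shows "subset_sum {v\<in>V0 (2*m+6). v x = -1} k = 0"
proof (rule subset_sum_flip_closed)
  show "flip_except x ` {v\<in>V0 (2*m+6). v x = -1} \<subseteq> {v\<in>V0 (2*m+6). v x = -1}"
    using flip_except_closed_V0_coord_neg(1)[OF assms(1)] by blast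
qed (use finite_V0 assms(2,3) in auto)

lemma binomial_Suc_eq_diff_times:
  "Suc k * (n choose Suc k) = (n - k) * (n choose k)"
  by (simp only: binomial_absorption binomial_absorb_comp)

lemma central_binomial_Suc:
  "(2*k+2) choose (k+1) = 2 * ((2*k+1) choose k)"
proof -
  have "(2*k+2) choose (k+1) = ((2*k+1) choose k) + ((2*k+1) choose (k+1))"
    using binomial_Suc_Suc[of "2*k+1" k] by simp
  moreover have "(2*k+1) choose (k+1) = (2*k+1) choose k"
    using binomial_symmetric[of k "2*k+1"] by (simp del: binomial_Suc_Suc)
  ultimately show ?thesis
    by simp
qed

lemma central_binomial_Suc_Suc:
  "(2*k+4) choose (k+2) = 2 * ((2*k+3) choose (k+1))"
proof -
  have "2*(k+1)+2 = 2*k+4" and "k+1+1 = k+2" and "2*(k+1)+1 = 2*k+3"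
    by simp_all
  then show ?thesis
    using central_binomial_Suc[of "k+1"] by (simp only:)
qed

lemma binomial_gap_times:
  "int (m+3) * (int ((2*m+3) choose (m+1)) - int ((2*m+3) choose m))
     = int ((2*m+4) choose (m+2))"
proof -
  have "(m+1) * ((2*m+3) choose (m+1)) = (m+3) * ((2*m+3) choose m)"
    using binomial_Suc_eq_diff_times[of m "2*m+3"] by simp
  then show ?thesis
    unfolding central_binomial_Suc_Suc
    by (simp add: algebra_simps del: binomial_Suc_Suc flip: of_nat_mult)
qed

lemma g_V0_eq_half_subset_sum: "g_V0 n i = real_of_int (subset_sum (V0 n) i) / 2"
  unfolding g_V0_def subset_sum_def by simp

lemma g_V0_coord_0:
  "g_V0 (2*m+6) 0 = (3 * real ((2*m+3) choose (m+1)) + real ((2*m+3) choose m)) / 2"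
proof -
  have x: "1 \<in> {1..<2*m+6}"
    by simp
  have "finite {v\<in>V0 (2*m+6). v 1 = 1}" "finite {v\<in>V0 (2*m+6). v 1 = -1}"
    using finite_V0 by auto
  then have "card (V0 (2*m+6)) = card {v\<in>V0 (2*m+6). v 1 = 1} + card {v\<in>V0 (2*m+6). v 1 = -1}"
    by (subst V0_split_at_coord[OF x]) (rule card_Un_disjoint; auto)
  then show ?thesis
    unfolding g_V0_eq_half_subset_sum subset_sum_coord_0[OF order.refl]
    using card_V0_coord_pos[OF x] card_V0_coord_neg[OF x] central_binomial_Suc_Suc[of m] by simp
qed

lemma g_V0_coord:
  assumes "i \<in> {1..<2*m+6}"
  shows "g_V0 (2*m+6) i = (real ((2*m+3) choose m) - real ((2*m+3) choose (m+1))) / 2"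
proof -
  obtain x where x: "x \<in> {1..<2*m+6}" "x \<noteq> i"
    using exists_other_coord[of "2*m+6"] by auto
  have "finite {v\<in>V0 (2*m+6). v x = 1}" "finite {v\<in>V0 (2*m+6). v x = -1}"
    using finite_V0 by auto
  then have "subset_sum (V0 (2*m+6)) i
      = subset_sum {v\<in>V0 (2*m+6). v x = 1} i + subset_sum {v\<in>V0 (2*m+6). v x = -1} i"
    by (subst V0_split_at_coord[OF x(1)]) (rule subset_sum_Un; auto)
  then show ?thesis
    unfolding g_V0_eq_half_subset_sum
    using subset_sum_V0_coord_pos[OF x(1) assms x(2)[symmetric]]
      subset_sum_V0_coord_neg[OF x(1), of i] assms x(2) by simp
qed

lemma coord_0_bounds_of_box:
  fixes u :: "nat \<Rightarrow> int" and \<rho> :: real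
  assumes "\<bar>real_of_int (u 0) - g_V0 (2*m+6) 0\<bar> \<le> \<rho>"
    and "2 * \<rho> + 2 \<le> real ((2*m+3) choose (m+1)) - real ((2*m+3) choose m)"
  shows "int (((2*m+3) choose (m+1)) + ((2*m+3) choose m)) \<le> u 0"
    and "u 0 \<le> int (((2*m+3) choose (m+1)) + ((2*m+3) choose m)) + int ((2*m+4) choose (m+2))"
proof -
  define A D where "A = (2*m+3) choose (m+1)" and "D = (2*m+3) choose m"
  have "\<bar>real_of_int (u 0) - (3 * real A + real D) / 2\<bar> \<le> \<rho>"
    using assms(1) unfolding g_V0_coord_0 A_def D_def .
  then have "real A + real D \<le> real_of_int (u 0)" and "real_of_int (u 0) \<le> 3 * real A + real D"
    using assms(2) of_nat_0_le_iff[where 'a=real, of D]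
    unfolding A_def[symmetric] D_def[symmetric] abs_le_iff by argo+
  then show "int (A + D) \<le> u 0" and "u 0 \<le> int (A + D) + int ((2*m+4) choose (m+2))"
    unfolding central_binomial_Suc_Suc A_def[symmetric] by linarith+
qed

lemma coord_lower_bound_of_box:
  fixes u :: "nat \<Rightarrow> int" and \<rho> :: real
  assumes "i \<in> {1..<2*m+6}" and "\<bar>real_of_int (u i) - g_V0 (2*m+6) i\<bar> \<le> \<rho>"
    and "2 * \<rho> + 2 \<le> real ((2*m+3) choose (m+1)) - real ((2*m+3) choose m)"
  shows "int ((2*m+3) choose m) - int ((2*m+3) choose (m+1)) + 1 \<le> u i"
proof -
  define A D where "A = (2*m+3) choose (m+1)" and "D = (2*m+3) choose m"
  have "\<bar>real_of_int (u i) - (real D - real A) / 2\<bar> \<le> \<rho>"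
    using assms(2) unfolding g_V0_coord[OF assms(1)] A_def D_def .
  then have "real_of_int (int D - int A + 1) \<le> real_of_int (u i)"
    using assms(3) unfolding A_def[symmetric] D_def[symmetric] abs_le_iff by simp argo
  then show "int D - int A + 1 \<le> u i"
    by (simp only: of_int_le_iff)
qed

lemma initial_subset:
  fixes m x :: nat and u :: "nat \<Rightarrow> int" and \<rho> :: real
  assumes x: "x \<in> {1..<2*m+6}"
    and box: "\<forall>i<2*m+6. \<bar>real_of_int (u i) - g_V0 (2*m+6) i\<bar> \<le> \<rho>"
    and gap: "2 * \<rho> + 2 \<le> real ((2*m+3) choose (m+1)) - real ((2*m+3) choose m)"
  obtains W where "dominated_except (2*m+6) u x W"
proof -
  let ?P = "{v\<in>V0 (2*m+6). v x = 1}" and ?N = "{v\<in>V0 (2*m+6). v x = -1}"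
  have fin: "finite ?P" "finite ?N" and disj: "?P \<inter> ?N = {}"
    using finite_V0 by auto
  have "\<bar>real_of_int (u 0) - g_V0 (2*m+6) 0\<bar> \<le> \<rho>"
    using box by simp
  note u0_bounds = coord_0_bounds_of_box[of u m \<rho>, OF this gap]
  define t where "t = nat (u 0) - card ?P"
  have "t \<le> card ?N"
    using u0_bounds unfolding t_def card_V0_coord_pos[OF x] card_V0_coord_neg[OF x] by linarith
  moreover have "\<forall>v\<in>?N. flip_except x v \<in> ?N \<and> flip_except x v \<noteq> v"
    using flip_except_closed_V0_coord_neg[OF x] by simp
  ultimately obtain Q where Q: "Q \<subseteq> ?N" "card Q = t"
    "\<forall>k\<in>{1..<2*m+6}. k \<noteq> x \<longrightarrow> subset_sum Q k \<le> 1"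
    using flip_closed_padding[OF fin(2), of "2*m+6" x t] by auto
  have fin_Q: "finite Q"
    using finite_subset[OF Q(1) fin(2)] .
  have disj_Q: "?P \<inter> Q = {}"
    using Q(1) disj by blast
  have "int (card (?P \<union> Q)) = u 0"
    using card_Un_disjoint[OF fin(1) fin_Q disj_Q] card_V0_coord_pos[OF x] Q(2) u0_bounds
    unfolding t_def by linarith
  moreover have "subset_sum (?P \<union> Q) i \<le> u i" if "i \<in> {1..<2*m+6}" "i \<noteq> x" for i
    using subset_sum_Un[OF fin(1) fin_Q disj_Q, of i] subset_sum_V0_coord_pos[OF x that(1)] that(2)
      Q(3) coord_lower_bound_of_box[of i m u \<rho>, OF that(1) _ gap] box that(1) by force
  moreover have "?P \<union> Q \<subseteq> V0 (2*m+6)"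
    using Q(1) by blast
  ultimately have "dominated_except (2*m+6) u x (?P \<union> Q)"
    unfolding dominated_except_def using fin(1) fin_Q by blast
  then show ?thesis
    by (rule that)
qed

lemma box_gap_of_binomial_bound:
  fixes R m :: nat
  assumes "4 * R * (2*m+5) < (2*m+4) choose (m+2)"
  shows "2 * (real R - real (2*m+6) / 2) + 2
           \<le> real ((2*m+3) choose (m+1)) - real ((2*m+3) choose m)"
proof -
  define \<delta> where "\<delta> = int ((2*m+3) choose (m+1)) - int ((2*m+3) choose m)"
  have "int (m+3) * (2 * int R) \<le> int (4 * R * (2*m+5))"
    by (simp add: algebra_simps)
  also have "\<dots> < int (m+3) * \<delta>"
    using assms binomial_gap_times[of m] unfolding \<delta>_def by linarith
  finally have "2 * int R < \<delta>"
    by (simp only: mult_less_cancel_left_pos of_nat_0_less_iff)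
  then have "2 * real R < real ((2*m+3) choose (m+1)) - real ((2*m+3) choose m)"
    unfolding \<delta>_def by linarith
  moreover have "real (2*m+6) / 2 = real m + 3" and "0 \<le> real m"
    by simp_all
  ultimately show ?thesis
    by argo
qed

lemma even_dimension_of_binomial_bound:
  fixes n R :: nat
  assumes "even n" and "0 < n" and "0 < R" and "4 * R * (n - 1) < (n - 2) choose ((n - 2) div 2)"
  obtains m where "n = 2*m+6" and "4 * R * (2*m+5) < (2*m+4) choose (m+2)"
proof -
  obtain k where k: "n = 2 * k"
    using assms(1) by (elim evenE)
  moreover have "k \<noteq> 1" and "k \<noteq> 2"
    using assms(3,4) k by auto
  ultimately have n: "n = 2*(k-3)+6"
    using assms(2) by presburger
  then have "n - 2 = 2*(k-3)+4" and "(2*(k-3)+4) div 2 = (k-3)+2" and "n - 1 = 2*(k-3)+5"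
    by simp_all
  then have "4 * R * (2*(k-3)+5) < (2*(k-3)+4) choose ((k-3)+2)"
    using assms(4) by (simp only:)
  then show ?thesis
    by (rule that[of "k-3", OF n])
qed

theorem lemma4p2:
  fixes n R :: nat and u :: "nat \<Rightarrow> int"
  assumes "even n" and "n > 0"
    and "R > 0"
    and "(n - 2) choose ((n - 2) div 2) > 4 * R * (n - 1)"
    and "u \<in> lattice_V0 n"
    and "\<forall>i<n. \<bar>real_of_int (u i) - g_V0 n i\<bar> \<le> real R - real n / 2"
  shows "u \<in> P_V0 n"
proof -
  obtain m where n: "n = 2*m+6" and bound: "4 * R * (2*m+5) < (2*m+4) choose (m+2)"
    using even_dimension_of_binomial_bound[OF assms(1-4)] .
  have "Max (u ` {1..<n}) \<in> u ` {1..<n}"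
    using n by (intro Max_in) auto
  then obtain x where x: "x \<in> {1..<n}" "Max (u ` {1..<n}) = u x"
    by blast
  have u_max: "\<forall>j\<in>{1..<n}. u j \<le> u x"
    unfolding x(2)[symmetric] by (intro ballI Max_ge) auto
  obtain W where "dominated_except n u x W"
    using initial_subset[OF x(1)[unfolded n] assms(6)[unfolded n] box_gap_of_binomial_bound[OF bound]]
    unfolding n .
  then show ?thesis
  proof (rule greedy_completion[OF _ x(1) u_max sum_lattice_V0[OF assms(5)]])
    show "u i = 0" if "n \<le> i" for i
      using lattice_V0_beyond[OF assms(5) that] .
    show "even (u i + u 0)" if "i < n" for i
      using even_lattice_V0_add_coord_0[OF assms(5) that] .
  qed
qed

end
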